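(* Let $d$ be an integer and $x$ a real number with $0<d\leqslant x/2$. Then $$\sum_{K_d-d<k\leqslant K_d}\Big(d^2\lfloor x/k\rfloor+\frac{2dx}{\lfloor x/k\rfloor}-x^2F(x/k)\Big)=\frac83\,d^2\sqrt{dx}+O(d^{7/2}x^{-1/2})+O(d^2),$$ where $k$ runs over integers, with absolute implied constants.
   Context: $\lfloor\cdot\rfloor$ denotes the integer part. For an integer $d\geqslant 0$ and real $x>0$, $K_d=K_d(x)=\big\lfloor \big(d+\sqrt{d^2+4dx}\,\big)/2\big\rfloor$. For real $t$, $F(t)=\sum_{n>t-1}\frac{1}{n^2(n+1)^2}$, summed over positive integers $n>t-1$. *)

theory Defs
  imports "HOL-Analysis.Analysis"
begin

definition K :: "int \<Rightarrow> real \<Rightarrow> int" where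
  "K d x = \<lfloor>(real_of_int d + sqrt ((real_of_int d)^2 + 4 * real_of_int d * x)) / 2\<rfloor>"

definition F :: "real \<Rightarrow> real" where
  "F t = infsum (\<lambda>n::nat. 1 / ((real n)^2 * (real n + 1)^2)) {n. 0 < n \<and> t - 1 < real n}"

end

theory Submission imports Defs "HOL-Real_Asymp.Real_Asymp" begin

text \<open>Each of the \<open>d\<close> summands is within \<open>O(d^(5/2) x^(-1/2))\<close> of \<open>(8/3) d^(3/2) x^(1/2)\<close>. On the summation window \<open>m = \<lfloor>x/k\<rfloor>\<close> stays within
  distance 2 of \<open>\<surd>(x/d)\<close>, and \<open>F(x/k) = 1/(3m\<^sup>3) + O(m^(-5))\<close> by comparison with telescoping
  series. The function \<open>m \<mapsto> d\<^sup>2m + 2dx/m - x\<^sup>2/(3m\<^sup>3)\<close> is stationary to second order at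
  \<open>m = \<surd>(x/d)\<close>, where it equals \<open>(8/3) d^(3/2) x^(1/2)\<close>, so an error of 2 in \<open>m\<close> costs only
  a cubic amount.\<close>

lemma telescope_has_sum_atLeast:
  fixes a :: "nat \<Rightarrow> real"
  assumes lim: "a \<longlonglongrightarrow> 0" and antimono: "\<And>n. n \<ge> m \<Longrightarrow> a (Suc n) \<le> a n"
  shows "((\<lambda>n. a n - a (Suc n)) has_sum a m) {m..}"
proof -
  have "(\<lambda>i. a (i + m) - a (Suc i + m)) sums (a (0 + m) - 0)"
    using telescope_sums'[OF LIMSEQ_ignore_initial_segment[OF lim]] by simp
  then have "((\<lambda>i. a (i + m) - a (Suc (i + m))) has_sum a m) UNIV"
    using antimono by (intro sums_nonneg_imp_has_sum) simp_all
  then have "((\<lambda>n. a n - a (Suc n)) has_sum a m) ((\<lambda>i. i + m) ` UNIV)"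
    by (subst has_sum_reindex) (auto simp: o_def)
  moreover have "(\<lambda>i. i + m) ` UNIV = {m..}"
    by (auto simp: image_iff) presburger
  ultimately show ?thesis by simp
qed

lemma has_sum_atLeast_telescope_bounds:
  fixes a c f :: "nat \<Rightarrow> real"
  assumes "a \<longlonglongrightarrow> 0" "c \<longlonglongrightarrow> 0"
    and "\<And>n. n \<ge> m \<Longrightarrow> a (Suc n) \<le> a n" "\<And>n. n \<ge> m \<Longrightarrow> c (Suc n) \<le> c n"
    and lower: "\<And>n. n \<ge> m \<Longrightarrow> f n \<le> a n - a (Suc n)"
    and upper: "\<And>n. n \<ge> m \<Longrightarrow> a n - a (Suc n) - f n \<le> c n - c (Suc n)"
    and nonneg: "\<And>n. 0 \<le> f n"
  shows "a m - c m \<le> infsum f {m..}" "infsum f {m..} \<le> a m"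
proof -
  have Ta: "((\<lambda>n. a n - a (Suc n)) has_sum a m) {m..}"
    and Tc: "((\<lambda>n. c n - c (Suc n)) has_sum c m) {m..}"
    using assms by (auto intro: telescope_has_sum_atLeast)
  have "f summable_on {m..}"
    using lower nonneg by (intro summable_on_comparison_test[OF has_sum_imp_summable[OF Ta]]) auto
  then have Tf: "(f has_sum infsum f {m..}) {m..}" by simp
  show "infsum f {m..} \<le> a m"
    using has_sum_mono[OF Tf Ta] lower by simp
  have "((\<lambda>n. (a n - a (Suc n)) + - f n) has_sum (a m + - infsum f {m..})) {m..}"
    by (intro has_sum_add Ta has_sum_uminus[THEN iffD2]) (simp add: Tf)
  from has_sum_mono[OF this Tc] upper show "a m - c m \<le> infsum f {m..}" by simp
qed

lemma inverse_cubes_le_fifth_power_diff: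
  fixes y :: real
  assumes "y > 0"
  shows "1 / (3 * y^3 * (y + 1)^3) \<le> 1 / y^5 - 1 / (y + 1)^5"
proof -
  have "3 * ((y + 1)^5 - y^5) - y^2 * (y + 1)^2 = 14*y^4 + 28*y^3 + 29*y^2 + 15*y + 3"
    by algebra
  also have "\<dots> \<ge> 0" using assms by simp
  finally have "y^2 * (y + 1)^2 \<le> 3 * ((y + 1)^5 - y^5)" by linarith
  then have "y^3 * (y + 1)^3 * (y^2 * (y + 1)^2) \<le> y^3 * (y + 1)^3 * (3 * ((y + 1)^5 - y^5))"
    using assms by (intro mult_left_mono) auto
  then have "y^5 * (y + 1)^5 \<le> 3 * y^3 * (y + 1)^3 * ((y + 1)^5 - y^5)"
    by (simp add: algebra_simps eval_nat_numeral)
  then show ?thesis using assms by (simp add: field_simps)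
qed

definition F_term :: "nat \<Rightarrow> real" where
  "F_term n = 1 / ((real n)^2 * (real n + 1)^2)"

lemma F_eq_infsum_atLeast:
  assumes "1 \<le> \<lfloor>t\<rfloor>"
  shows "F t = infsum F_term {nat \<lfloor>t\<rfloor>..}"
proof -
  have "{n. 0 < n \<and> t - 1 < real n} = {nat \<lfloor>t\<rfloor>..}"
    using assms by (auto simp: floor_less_iff nat_le_iff) linarith+
  then show ?thesis unfolding F_def F_term_def by simp
qed

lemma infsum_F_term_atLeast_bounds:
  assumes "m \<ge> 1"
  shows "1 / (3 * real m ^ 3) - 1 / real m ^ 5 \<le> infsum F_term {m..}"
    "infsum F_term {m..} \<le> 1 / (3 * real m ^ 3)"
proof -
  define a where "a n = 1 / (3 * real n ^ 3)" for n
  define c where "c n = 1 / real n ^ 5" for n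
  have defect: "a n - a (Suc n) - F_term n = 1 / (3 * real n ^ 3 * (real n + 1) ^ 3)"
    if "n \<ge> 1" for n
    using that unfolding a_def F_term_def by (simp add: field_simps) algebra
  have "a \<longlonglongrightarrow> 0" "c \<longlonglongrightarrow> 0" unfolding a_def c_def by real_asymp+
  moreover have "a (Suc n) \<le> a n" "c (Suc n) \<le> c n" if "n \<ge> m" for n
    using that assms unfolding a_def c_def by (auto simp: divide_simps intro!: power_mono)
  moreover have "F_term n \<le> a n - a (Suc n)" if "n \<ge> m" for n
  proof -
    have "0 \<le> 1 / (3 * real n ^ 3 * (real n + 1) ^ 3)" by simp
    then show ?thesis using defect[of n] that assms by linarith
  qed
  moreover have "a n - a (Suc n) - F_term n \<le> c n - c (Suc n)" if "n \<ge> m" for n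
    using defect[of n] inverse_cubes_le_fifth_power_diff[of "real n"] that assms
    unfolding c_def by (simp add: add.commute)
  moreover have "0 \<le> F_term n" for n unfolding F_term_def by simp
  ultimately have "a m - c m \<le> infsum F_term {m..}" "infsum F_term {m..} \<le> a m"
    by (rule has_sum_atLeast_telescope_bounds; blast)+
  then show "1 / (3 * real m ^ 3) - 1 / real m ^ 5 \<le> infsum F_term {m..}"
    "infsum F_term {m..} \<le> 1 / (3 * real m ^ 3)"
    unfolding a_def c_def by simp_all
qed

text \<open>Written in \<open>a = \<surd>d\<close> and \<open>b = \<surd>x\<close>, the summand and its main term become rational.\<close>
lemma main_term_cubic_error:
  fixes a b m :: real
  assumes a: "a > 0" and b: "b > 0" and ab: "a \<le> b" and m: "m \<ge> 1"
    and dist: "\<bar>m - b / a\<bar> \<le> 2" and ratio: "b / a \<le> 3 * m"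
  shows "\<bar>a^4 * m + 2 * a^2 * b^2 / m - b^4 / (3 * m^3) - 8 / 3 * a^3 * b\<bar> \<le> 144 * a^5 / b"
proof -
  define m0 where "m0 = b / a"
  have m0: "m0 > 0" using a b by (simp add: m0_def)
  have b_eq: "b = a * m0" using a by (simp add: m0_def)
  have "a^4 * m + 2 * a^2 * b^2 / m - b^4 / (3 * m^3) - 8 / 3 * a^3 * b
      = a^4 * (m - m0)^3 * (3 * m + m0) / (3 * m^3)"
    unfolding b_eq using m a by (simp add: field_simps) algebra
  then have "\<bar>a^4 * m + 2 * a^2 * b^2 / m - b^4 / (3 * m^3) - 8 / 3 * a^3 * b\<bar>
      = a^4 * \<bar>m - m0\<bar>^3 * (3 * m + m0) / (3 * m^3)"
    using m m0 by (simp add: abs_mult power_abs)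
  also have "\<dots> \<le> a^4 * 8 * (6 * m) / (3 * m^3)"
    using m m0 ratio dist power_mono[of "\<bar>m - m0\<bar>" 2 3]
    by (intro divide_right_mono mult_mono) (auto simp: m0_def)
  also have "\<dots> = 16 * a^4 / m^2" using m by (simp add: field_simps eval_nat_numeral)
  also have "\<dots> \<le> 144 * a^4 / m0^2"
  proof -
    have "m0^2 \<le> (3 * m)^2" using ratio m0 by (intro power_mono) (auto simp: m0_def)
    then show ?thesis using m m0 a by (simp add: field_simps)
  qed
  also have "\<dots> = 144 * a^6 / b^2" using a by (simp add: b_eq field_simps eval_nat_numeral)
  also have "\<dots> \<le> 144 * a^5 / b"
  proof -
    have "a^6 * b \<le> a^5 * b^2" using ab a b by (simp add: eval_nat_numeral mult_left_mono mult.assoc)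
    then show ?thesis using b by (simp add: field_simps)
  qed
  finally show ?thesis .
qed

lemma scaled_summand_approx:
  fixes a b m G :: real
  assumes a: "a > 0" and b: "b > 0" and "a \<le> b" and m: "m \<ge> 1"
    and "\<bar>m - b / a\<bar> \<le> 2" and ratio: "b / a \<le> 3 * m"
    and G_lower: "1 / (3 * m^3) - 1 / m^5 \<le> G" and G_upper: "G \<le> 1 / (3 * m^3)"
  shows "\<bar>a^4 * m + 2 * a^2 * b^2 / m - b^4 * G - 8 / 3 * a^3 * b\<bar> \<le> 400 * a^5 / b"
proof -
  have "b^4 * (1 / (3 * m^3) - 1 / m^5) \<le> b^4 * G" "b^4 * G \<le> b^4 * (1 / (3 * m^3))"
    using G_lower G_upper by (intro mult_left_mono; simp)+
  then have tail: "\<bar>b^4 * G - b^4 / (3 * m^3)\<bar> \<le> b^4 / m^5"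
    by (simp add: algebra_simps abs_le_iff)
  have "(b / a)^5 \<le> (3 * m)^5" using ratio a b by (intro power_mono) auto
  then have "b^5 \<le> 243 * a^5 * m^5" using a by (simp add: power_divide field_simps)
  then have "b^4 / m^5 \<le> 243 * a^5 / b" using a b m by (simp add: field_simps eval_nat_numeral)
  with tail main_term_cubic_error[OF assms(1-6)] have
    "\<bar>a^4 * m + 2 * a^2 * b^2 / m - b^4 * G - 8 / 3 * a^3 * b\<bar> \<le> 243 * a^5 / b + 144 * a^5 / b"
    by linarith
  also have "\<dots> \<le> 400 * a^5 / b" using a b by (simp add: field_simps)
  finally show ?thesis .
qed

lemma K_eq_floor_root:
  assumes d: "0 \<le> d" and r: "0 \<le> r" and root: "r * (r + real_of_int d) = real_of_int d * x"
  shows "K d x = \<lfloor>r + real_of_int d\<rfloor>"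
proof -
  have "(real_of_int d)^2 + 4 * real_of_int d * x = (2 * r + real_of_int d)^2"
    using root by (simp add: power2_eq_square algebra_simps)
  then have "sqrt ((real_of_int d)^2 + 4 * real_of_int d * x) = 2 * r + real_of_int d"
    using d r by simp
  moreover have "(real_of_int d + (2 * r + real_of_int d)) / 2 = r + real_of_int d" by simp
  ultimately show ?thesis unfolding K_def by presburger
qed

lemma quotient_in_root_window:
  fixes r D x k :: real
  assumes r: "r > 0" and D: "D > 0" and root: "r * (r + D) = D * x"
    and k: "r < k" "k \<le> r + D"
  shows "r / D \<le> x / k" "x / k < r / D + 1"
proof -
  have "D * x > 0" using root r D by (metis add_pos_pos mult_pos_pos)
  then have x: "x > 0" using D by (simp add: zero_less_mult_iff)
  have "r / D = x / (r + D)" and "r / D + 1 = x / r"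
    using root r D by (simp_all add: field_simps)
  then show "r / D \<le> x / k" "x / k < r / D + 1"
    using k r x by (auto intro: divide_left_mono divide_strict_left_mono)
qed

lemma floor_near_sqrt:
  fixes u t c :: real
  assumes u: "1 \<le> u" and t: "u \<le> t" "t < u + 1" and c: "u * (u + 1) = c"
  shows "1 \<le> \<lfloor>t\<rfloor>" "\<bar>real_of_int \<lfloor>t\<rfloor> - sqrt c\<bar> \<le> 2" "sqrt c \<le> 3 * real_of_int \<lfloor>t\<rfloor>"
proof -
  have "u^2 < c" "c < (u + 1)^2" using c u by (simp_all add: power2_eq_square algebra_simps)
  then have sqrt_c: "u < sqrt c" "sqrt c < u + 1"
    using u real_less_rsqrt real_sqrt_less_mono[of c "(u + 1)^2"] by auto
  have floor_t: "t - 1 < real_of_int \<lfloor>t\<rfloor>" "real_of_int \<lfloor>t\<rfloor> \<le> t" by linarith+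
  show "1 \<le> \<lfloor>t\<rfloor>" using u t by linarith
  show "\<bar>real_of_int \<lfloor>t\<rfloor> - sqrt c\<bar> \<le> 2" using t sqrt_c floor_t by linarith
  show "sqrt c \<le> 3 * real_of_int \<lfloor>t\<rfloor>"
    using t sqrt_c floor_t \<open>1 \<le> \<lfloor>t\<rfloor>\<close> by (cases "u \<ge> 2") linarith+
qed

text \<open>With \<open>r\<close> the positive root of \<open>r(r + d) = dx\<close>, the summation range
  \<open>K\<^sub>d - d < k \<le> K\<^sub>d\<close> lies in \<open>(r, r + d]\<close>, so \<open>x/k\<close> lies in \<open>[u, u + 1)\<close> with \<open>u = r/d\<close> and
  \<open>u(u + 1) = x/d\<close>; thus \<open>\<lfloor>x/k\<rfloor>\<close> stays within distance 2 of \<open>\<surd>(x/d)\<close>.\<close>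
lemma floor_quotient_in_K_window:
  fixes d k :: int and x :: real
  assumes d: "d > 0" and dx: "real_of_int d \<le> x / 2" and k: "K d x - d < k" "k \<le> K d x"
  shows "k > 0" "1 \<le> \<lfloor>x / real_of_int k\<rfloor>"
    "\<bar>real_of_int \<lfloor>x / real_of_int k\<rfloor> - sqrt (x / real_of_int d)\<bar> \<le> 2"
    "sqrt (x / real_of_int d) \<le> 3 * real_of_int \<lfloor>x / real_of_int k\<rfloor>"
proof -
  define D where "D = real_of_int d"
  have D: "D > 0" and x: "x \<ge> 2 * D" using d dx by (simp_all add: D_def)
  define r where "r = (sqrt (D^2 + 4 * D * x) - D) / 2"
  have "D^2 < D^2 + 4 * D * x" using D x by simp
  then have "D < sqrt (D^2 + 4 * D * x)" using D real_less_rsqrt by blast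
  then have r: "r > 0" by (simp add: r_def)
  have root: "r * (r + D) = D * x"
    using D x by (simp add: r_def field_simps power2_eq_square)
  have "K d x = \<lfloor>r + D\<rfloor>" using K_eq_floor_root d r root by (simp add: D_def)
  then have window: "r < real_of_int k" "real_of_int k \<le> r + D"
    using k by (simp_all add: D_def) linarith+
  then show "k > 0" using r by linarith
  define u where "u = r / D"
  have "u * (u + 1) = x / D" using root D by (simp add: u_def field_simps)
  moreover have "1 \<le> u"
  proof (rule ccontr)
    assume "\<not> 1 \<le> u"
    then have "u * (u + 1) < 1 * 2" using r D by (intro mult_strict_mono) (auto simp: u_def)
    moreover have "x / D \<ge> 2" using x D by (simp add: field_simps)
    ultimately show False using \<open>u * (u + 1) = x / D\<close> by simp
  qed
  moreover have "u \<le> x / real_of_int k" "x / real_of_int k < u + 1"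
    using quotient_in_root_window[OF r D root window] by (simp_all add: u_def)
  ultimately show "1 \<le> \<lfloor>x / real_of_int k\<rfloor>"
    "\<bar>real_of_int \<lfloor>x / real_of_int k\<rfloor> - sqrt (x / real_of_int d)\<bar> \<le> 2"
    "sqrt (x / real_of_int d) \<le> 3 * real_of_int \<lfloor>x / real_of_int k\<rfloor>"
    using floor_near_sqrt[of u "x / real_of_int k" "x / D"] by (simp_all add: D_def)
qed

definition summand :: "int \<Rightarrow> real \<Rightarrow> int \<Rightarrow> real" where
  "summand d x k = (real_of_int d)^2 * real_of_int \<lfloor>x / real_of_int k\<rfloor>
     + 2 * real_of_int d * x / real_of_int \<lfloor>x / real_of_int k\<rfloor> - x^2 * F (x / real_of_int k)"

lemma summand_bound_in_K_window:
  fixes d k :: int and x :: real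
  assumes d: "d > 0" and dx: "real_of_int d \<le> x / 2" and k: "K d x - d < k" "k \<le> K d x"
  shows "\<bar>summand d x k - 8 / 3 * real_of_int d * sqrt (real_of_int d * x)\<bar>
     \<le> 400 * real_of_int d powr (5/2) * x powr (-1/2)"
proof -
  note window = floor_quotient_in_K_window[OF d dx k]
  define D where "D = real_of_int d"
  define m where "m = \<lfloor>x / real_of_int k\<rfloor>"
  define a where "a = sqrt D"
  define b where "b = sqrt x"
  have D: "D \<ge> 1" and x: "x \<ge> 2 * D" using d dx by (simp_all add: D_def)
  have a: "a > 0" and b: "b > 0" and ab: "a \<le> b" using D x by (simp_all add: a_def b_def)
  have a2: "a^2 = D" and b2: "b^2 = x" using D x by (simp_all add: a_def b_def)
  have m: "1 \<le> m" using window(2) by (simp add: m_def)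
  have "F (x / real_of_int k) = infsum F_term {nat m..}"
    using F_eq_infsum_atLeast window(2) by (simp add: m_def)
  moreover have "real (nat m) = real_of_int m" using m by simp
  ultimately have G: "1 / (3 * real_of_int m ^ 3) - 1 / real_of_int m ^ 5 \<le> F (x / real_of_int k)"
    "F (x / real_of_int k) \<le> 1 / (3 * real_of_int m ^ 3)"
    using infsum_F_term_atLeast_bounds[of "nat m"] m by simp_all
  have "b / a = sqrt (x / D)" by (simp add: a_def b_def real_sqrt_divide)
  then have "\<bar>a^4 * m + 2 * a^2 * b^2 / m - b^4 * F (x / real_of_int k) - 8 / 3 * a^3 * b\<bar>
      \<le> 400 * a^5 / b"
    using m window(3,4) by (intro scaled_summand_approx[OF a b ab _ _ _ G]) (auto simp: D_def m_def)
  moreover have "a^4 = D^2" "b^4 = x^2"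
    by (simp_all flip: a2 b2 add: power_mult[symmetric])
  moreover have "a^3 * b = a^2 * (a * b)" by (simp add: eval_nat_numeral)
  then have "a^3 * b = D * sqrt (D * x)" unfolding a2 by (simp add: a_def b_def real_sqrt_mult)
  moreover have "a^5 / b = D powr (5/2) * x powr (-1/2)"
  proof -
    have "D powr (5/2) = D powr 2 * D powr (1/2)" by (simp flip: powr_add)
    then have "D powr (5/2) = a^5" using D a2 by (simp add: powr_half_sqrt a_def eval_nat_numeral)
    moreover have "x powr (-1/2) = 1 / b" using x D by (simp add: powr_minus_divide powr_half_sqrt b_def)
    ultimately show ?thesis by simp
  qed
  ultimately show ?thesis by (simp add: summand_def a2 b2 D_def m_def)
qed

lemma abs_sum_minus_card_mult_le:
  fixes t :: "'a \<Rightarrow> real" and c e :: real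
  assumes "\<And>k. k \<in> S \<Longrightarrow> \<bar>t k - c\<bar> \<le> e"
  shows "\<bar>sum t S - card S * c\<bar> \<le> card S * e"
proof -
  have "\<bar>sum t S - card S * c\<bar> = \<bar>\<Sum>k\<in>S. t k - c\<bar>" by (simp add: sum_subtractf)
  also have "\<dots> \<le> (\<Sum>k\<in>S. \<bar>t k - c\<bar>)" by (rule sum_abs)
  also have "\<dots> \<le> (\<Sum>k\<in>S. e)" using assms by (rule sum_mono)
  finally show ?thesis by simp
qed

lemma sum_summand_K_window_approx:
  fixes d :: int and x :: real
  assumes d: "d > 0" and dx: "real_of_int d \<le> x / 2"
  shows "\<bar>(\<Sum>k\<in>{K d x - d<..K d x}. summand d x k) - 8 / 3 * (real_of_int d)^2 * sqrt (d * x)\<bar>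
    \<le> 400 * real_of_int d powr (7/2) * x powr (-1/2)"
proof -
  let ?S = "{K d x - d<..K d x}"
  have "\<bar>(\<Sum>k\<in>?S. summand d x k) - card ?S * (8 / 3 * d * sqrt (d * x))\<bar>
     \<le> card ?S * (400 * d powr (5/2) * x powr (-1/2))"
    by (rule abs_sum_minus_card_mult_le) (use summand_bound_in_K_window[OF d dx] in auto)
  moreover have "real (card ?S) = real_of_int d" using d by simp
  moreover have "d * (8 / 3 * d * sqrt (d * x)) = 8 / 3 * (real_of_int d)^2 * sqrt (d * x)"
    by (simp add: power2_eq_square)
  moreover have "d * (400 * d powr (5/2) * x powr (-1/2)) = 400 * d powr (7/2) * x powr (-1/2)"
    using d by (simp add: powr_add[of "real_of_int d" 1 "5/2", simplified])
  ultimately show ?thesis by metis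
qed

theorem proposition7:
  "\<exists>C1 C2::real. \<forall>(d::int) (x::real). 0 < d \<and> real_of_int d \<le> x / 2 \<longrightarrow>
     \<bar>(\<Sum>k\<in>{K d x - d<..K d x}.
          (real_of_int d)^2 * real_of_int \<lfloor>x / real_of_int k\<rfloor>
          + 2 * real_of_int d * x / real_of_int \<lfloor>x / real_of_int k\<rfloor>
          - x^2 * F (x / real_of_int k))
       - 8 / 3 * (real_of_int d)^2 * sqrt (real_of_int d * x)\<bar>
     \<le> C1 * real_of_int d powr (7/2) * x powr (-1/2) + C2 * (real_of_int d)^2"
  by (rule exI[of _ 400], rule exI[of _ 0])
    (use sum_summand_K_window_approx[unfolded summand_def] in auto)

end
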